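(* Consider a restless bandit, set system $(N^{\{0,1\}},\mathcal F)$ as in the context, and suppose the bandit is PCL-indexable relative to $b^u$ and $\mathcal F$-policies, with the adaptive-greedy algorithm on input $\widehat{\mathbf h}^0_{N^{\{0,1\}}}$ producing $\boldsymbol\pi=(\pi_1,\dots,\pi_n)$ and $\boldsymbol\nu$; let $S_k=\{\pi_k,\dots,\pi_n\}$ ($1\le k\le n$), $S_{n+1}=\emptyset$, and $v^S_i(\nu)=v^S_i+\nu b^S_i$. Then for each $i\in N$, $v_i(\nu)$ is continuous, concave and piecewise linear in $\nu$, and $$v_i(\nu)=\min\{v^{S_k}_i(\nu):1\le k\le n+1\}=\begin{cases} v^{S_1}_i(\nu), & \nu\in(-\infty,\nu_{\pi_1}],\\ v^{S_k}_i(\nu), & \nu\in[\nu_{\pi_{k-1}},\nu_{\pi_k}],\ 2\le k\le n,\\ v^{S_{n+1}}_i(\nu), & \nu\in[\nu_{\pi_n},+\infty).\end{cases}$$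
   Context: Restless bandit: finite state space $N=N^{\{0,1\}}\cup N^{\{1\}}$ (disjoint; controllable and uncontrollable states); actions $a\in\{0,1\}$; one-period costs $h^a_i$, transition probabilities $p^a_{ij}$ with $p^1_{ij}=p^0_{ij}$ for $i\in N^{\{1\}}$; discount factor $\beta\in(0,1)$; activity weights $\theta^1_j>0$. Stationary policies $u:N\to[0,1]$ (probability of active action) with $u(i)=1$ on $N^{\{1\}}$. $v^u_i=E^u_i[\sum_{t\ge0}h^{a(t)}_{X(t)}\beta^t]$, $b^u_i=E^u_i[\sum_{t\ge0}\theta^1_{X(t)}a(t)\beta^t]$. For $S\subseteq N^{\{0,1\}}$ the $S$-active policy is active on $S\cup N^{\{1\}}$, passive elsewhere; $v^S_i,b^S_i$ its measures. $v_i(\nu)=\min_u\{v^u_i+\nu b^u_i\}$. Marginal workloads $w^S_i=\theta^1_i1\{i\in N^{\{0,1\}}\}+\beta\sum_j(p^1_{ij}-p^0_{ij})b^S_j$. $\widehat{\mathbf h}^0=\mathbf h^0-(\mathbf I-\beta\mathbf P^0)(\mathbf I-\beta\mathbf P^1)^{-1}\mathbf h^1$. $\mathcal F\subseteq2^{N^{\{0,1\}}}$: $\emptyset\in\mathcal F$; each nonempty $S\in\mathcal F$ has nonempty $\partial^-S=\{j\in S:S\setminus\{j\}\in\mathcal F\}$; each $S\in\mathcal F$ other than $N^{\{0,1\}}$ has $j\notin S$ with $S\cup\{j\}\in\mathcal F$. Adaptive-greedy algorithm on input $\mathbf c$, $n=|N^{\{0,1\}}|$: $S_1=N^{\{0,1\}}$,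 $y^{S_1}=\min\{c_j/w^{S_1}_j:j\in\partial^-S_1\}$, $\pi_1$ a minimizer, $\nu_{\pi_1}=y^{S_1}$; for $k=2..n$: $S_k=S_{k-1}\setminus\{\pi_{k-1}\}$, $y^{S_k}=\min\{(c_j-\sum_{l<k}y^{S_l}w^{S_l}_j)/w^{S_k}_j:j\in\partial^-S_k\}$, $\pi_k$ a minimizer, $\nu_{\pi_k}=\nu_{\pi_{k-1}}+y^{S_k}$. PCL-indexability: (i) $w^S_j>0$ for $S\in\mathcal F$, $j\in N^{\{0,1\}}$; (ii) on input $(\widehat h^0_j)_{j\in N^{\{0,1\}}}$ the output satisfies $\nu_{\pi_1}\le\cdots\le\nu_{\pi_n}$. *)

theory Defs
  imports "HOL-Analysis.Analysis"
begin

text \<open>Restless bandit on a finite state set N. Transition matrices and cost vectors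
are functions; a stationary randomized policy u gives the probability of the active
action in each state.\<close>

definition pmat :: "('a \<Rightarrow> 'a \<Rightarrow> real) \<Rightarrow> ('a \<Rightarrow> 'a \<Rightarrow> real) \<Rightarrow> ('a \<Rightarrow> real) \<Rightarrow> 'a \<Rightarrow> 'a \<Rightarrow> real" where
  "pmat p0 p1 u i j = u i * p1 i j + (1 - u i) * p0 i j"

definition hcost :: "('a \<Rightarrow> real) \<Rightarrow> ('a \<Rightarrow> real) \<Rightarrow> ('a \<Rightarrow> real) \<Rightarrow> 'a \<Rightarrow> real" where
  "hcost h0 h1 u i = u i * h1 i + (1 - u i) * h0 i"

definition stepop :: "'a set \<Rightarrow> ('a \<Rightarrow> 'a \<Rightarrow> real) \<Rightarrow> ('a \<Rightarrow> real) \<Rightarrow> 'a \<Rightarrow> real" where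
  "stepop N P f i = (\<Sum>j\<in>N. P i j * f j)"

text \<open>Expected total discounted reward E_i[sum_t beta^t c(X t)] of a Markov chain with
transition matrix P: sum_t beta^t (P^t c)_i.\<close>
definition dval :: "'a set \<Rightarrow> real \<Rightarrow> ('a \<Rightarrow> 'a \<Rightarrow> real) \<Rightarrow> ('a \<Rightarrow> real) \<Rightarrow> 'a \<Rightarrow> real" where
  "dval N \<beta> P c i = (\<Sum>t. \<beta> ^ t * ((stepop N P ^^ t) c) i)"

text \<open>v^u_i : expected discounted cost; b^u_i : expected discounted work.\<close>
definition vpol :: "'a set \<Rightarrow> real \<Rightarrow> ('a \<Rightarrow> 'a \<Rightarrow> real) \<Rightarrow> ('a \<Rightarrow> 'a \<Rightarrow> real)
    \<Rightarrow> ('a \<Rightarrow> real) \<Rightarrow> ('a \<Rightarrow> real) \<Rightarrow> ('a \<Rightarrow> real) \<Rightarrow> 'a \<Rightarrow> real" where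
  "vpol N \<beta> p0 p1 h0 h1 u = dval N \<beta> (pmat p0 p1 u) (hcost h0 h1 u)"

definition bpol :: "'a set \<Rightarrow> real \<Rightarrow> ('a \<Rightarrow> 'a \<Rightarrow> real) \<Rightarrow> ('a \<Rightarrow> 'a \<Rightarrow> real)
    \<Rightarrow> ('a \<Rightarrow> real) \<Rightarrow> ('a \<Rightarrow> real) \<Rightarrow> 'a \<Rightarrow> real" where
  "bpol N \<beta> p0 p1 \<theta> u = dval N \<beta> (pmat p0 p1 u) (\<lambda>i. \<theta> i * u i)"

text \<open>Admissible stationary policies: u : N -> [0,1], u = 1 on the uncontrollable states.\<close>
definition policies :: "'a set \<Rightarrow> 'a set \<Rightarrow> ('a \<Rightarrow> real) set" where
  "policies N N1 = {u. \<forall>i\<in>N. 0 \<le> u i \<and> u i \<le> 1 \<and> (i \<in> N1 \<longrightarrow> u i = 1)}"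

definition sact :: "'a set \<Rightarrow> 'a set \<Rightarrow> 'a \<Rightarrow> real" where
  "sact N1 S i = (if i \<in> S \<union> N1 then 1 else 0)"

definition vopt :: "'a set \<Rightarrow> 'a set \<Rightarrow> real \<Rightarrow> ('a \<Rightarrow> 'a \<Rightarrow> real) \<Rightarrow> ('a \<Rightarrow> 'a \<Rightarrow> real)
    \<Rightarrow> ('a \<Rightarrow> real) \<Rightarrow> ('a \<Rightarrow> real) \<Rightarrow> ('a \<Rightarrow> real) \<Rightarrow> 'a \<Rightarrow> real \<Rightarrow> real" where
  "vopt N N1 \<beta> p0 p1 h0 h1 \<theta> i \<nu> =
     (INF u\<in>policies N N1. vpol N \<beta> p0 p1 h0 h1 u i + \<nu> * bpol N \<beta> p0 p1 \<theta> u i)"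

definition workload :: "'a set \<Rightarrow> 'a set \<Rightarrow> 'a set \<Rightarrow> real \<Rightarrow> ('a \<Rightarrow> 'a \<Rightarrow> real) \<Rightarrow> ('a \<Rightarrow> 'a \<Rightarrow> real)
    \<Rightarrow> ('a \<Rightarrow> real) \<Rightarrow> 'a set \<Rightarrow> 'a \<Rightarrow> real" where
  "workload N N01 N1 \<beta> p0 p1 \<theta> S i =
     (if i \<in> N01 then \<theta> i else 0)
     + \<beta> * (\<Sum>j\<in>N. (p1 i j - p0 i j) * bpol N \<beta> p0 p1 \<theta> (sact N1 S) j)"

text \<open>hat h^0 = h^0 - (I - beta P^0)(I - beta P^1)^{-1} h^1, with (I - beta P^1)^{-1} h^1
written as its Neumann series.\<close>
definition hhat0 :: "'a set \<Rightarrow> real \<Rightarrow> ('a \<Rightarrow> 'a \<Rightarrow> real) \<Rightarrow> ('a \<Rightarrow> 'a \<Rightarrow> real)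
    \<Rightarrow> ('a \<Rightarrow> real) \<Rightarrow> ('a \<Rightarrow> real) \<Rightarrow> 'a \<Rightarrow> real" where
  "hhat0 N \<beta> p0 p1 h0 h1 i =
     (let x = dval N \<beta> p1 h1 in h0 i - (x i - \<beta> * (\<Sum>j\<in>N. p0 i j * x j)))"

definition bdry :: "'a set set \<Rightarrow> 'a set \<Rightarrow> 'a set" where
  "bdry F S = {j\<in>S. S - {j} \<in> F}"

definition set_system :: "'a set \<Rightarrow> 'a set set \<Rightarrow> bool" where
  "set_system N01 F \<longleftrightarrow> F \<subseteq> Pow N01 \<and> {} \<in> F
     \<and> (\<forall>S\<in>F. S \<noteq> {} \<longrightarrow> bdry F S \<noteq> {})
     \<and> (\<forall>S\<in>F. S \<noteq> N01 \<longrightarrow> (\<exists>j\<in>N01 - S. insert j S \<in> F))"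

text \<open>Adaptive-greedy algorithm: pi k (k = 1..n) are the chosen states, y k = y^{S_k};
the sets are S_k = N01 - {pi 1, ..., pi (k-1)}.\<close>
definition ag_set :: "'a set \<Rightarrow> (nat \<Rightarrow> 'a) \<Rightarrow> nat \<Rightarrow> 'a set" where
  "ag_set N01 \<pi> k = N01 - \<pi> ` {1..<k}"

definition ag_ratio :: "'a set \<Rightarrow> ('a set \<Rightarrow> 'a \<Rightarrow> real) \<Rightarrow> ('a \<Rightarrow> real)
    \<Rightarrow> (nat \<Rightarrow> 'a) \<Rightarrow> (nat \<Rightarrow> real) \<Rightarrow> nat \<Rightarrow> 'a \<Rightarrow> real" where
  "ag_ratio N01 w c \<pi> y k j =
     (c j - (\<Sum>l\<in>{1..<k}. y l * w (ag_set N01 \<pi> l) j)) / w (ag_set N01 \<pi> k) j"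

definition adaptive_greedy :: "'a set \<Rightarrow> 'a set set \<Rightarrow> ('a set \<Rightarrow> 'a \<Rightarrow> real) \<Rightarrow> ('a \<Rightarrow> real)
    \<Rightarrow> (nat \<Rightarrow> 'a) \<Rightarrow> (nat \<Rightarrow> real) \<Rightarrow> bool" where
  "adaptive_greedy N01 F w c \<pi> y \<longleftrightarrow>
     (\<forall>k\<in>{1..card N01}.
        \<pi> k \<in> bdry F (ag_set N01 \<pi> k)
      \<and> y k = ag_ratio N01 w c \<pi> y k (\<pi> k)
      \<and> (\<forall>j\<in>bdry F (ag_set N01 \<pi> k). y k \<le> ag_ratio N01 w c \<pi> y k j))"

definition ag_nu :: "(nat \<Rightarrow> real) \<Rightarrow> nat \<Rightarrow> real" where
  "ag_nu y k = (\<Sum>l\<in>{1..k}. y l)"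

definition pcl_indexable where
  "pcl_indexable N N01 N1 F \<beta> p0 p1 h0 h1 \<theta> \<pi> y \<longleftrightarrow>
     (\<forall>S\<in>F. \<forall>j\<in>N01. workload N N01 N1 \<beta> p0 p1 \<theta> S j > 0)
   \<and> adaptive_greedy N01 F (workload N N01 N1 \<beta> p0 p1 \<theta>) (hhat0 N \<beta> p0 p1 h0 h1) \<pi> y
   \<and> (\<forall>k\<in>{1..<card N01}. ag_nu y k \<le> ag_nu y (Suc k))"

definition piecewise_linear :: "(real \<Rightarrow> real) \<Rightarrow> bool" where
  "piecewise_linear f \<longleftrightarrow> (\<exists>B. finite B \<and>
     (\<forall>a b. a < b \<and> {a<..<b} \<inter> B = {} \<longrightarrow> (\<exists>c d. \<forall>x\<in>{a<..<b}. f x = c + d * x)))"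

end

theory Submission
  imports Defs
begin

text \<open>For a fixed charge \<nu>, the S-active policy is optimal as soon as its Bellman gaps
  (active minus passive one-step value) are nonpositive on S and nonnegative off S, by the
  comparison principle for discounted Bellman equations. The gaps are affine in \<nu> with slope the
  marginal workload, and at the breakpoint \<nu>_{\<pi>_k} the gap of \<pi>_k vanishes, so removing \<pi>_k from
  S_k does not change the value there. Following the adaptive-greedy order this gives closed
  formulas for the gaps of all S_k, whose signs on [\<nu>_{\<pi>_{k-1}}, \<nu>_{\<pi>_k}] follow from the
  positivity of the workloads and the monotonicity of the \<nu>'s. Hence v_i is the lower envelope
  of the n + 1 affine functions \<nu> \<mapsto> v^{S_k}_i(\<nu>), so it is concave, continuous and piecewise
  linear.\<close>

definition stochastic :: "'a set \<Rightarrow> ('a \<Rightarrow> 'a \<Rightarrow> real) \<Rightarrow> bool" where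
  "stochastic N P \<longleftrightarrow> (\<forall>i\<in>N. \<forall>j\<in>N. 0 \<le> P i j) \<and> (\<forall>i\<in>N. (\<Sum>j\<in>N. P i j) = 1)"

lemma stepop_funpow_linear:
  "(stepop N P ^^ t) (\<lambda>i. a * f i + b * g i)
     = (\<lambda>i. a * (stepop N P ^^ t) f i + b * (stepop N P ^^ t) g i)"
  by (induction t) (simp_all add: stepop_def sum.distrib sum_distrib_left algebra_simps)

lemma stepop_funpow_cong:
  assumes "\<forall>i\<in>N. \<forall>j\<in>N. P i j = P' i j" "\<forall>i\<in>N. f i = f' i" "i \<in> N"
  shows "(stepop N P ^^ t) f i = (stepop N P' ^^ t) f' i"
  using assms(3) by (induction t arbitrary: i)
    (use assms(1,2) in \<open>auto simp: stepop_def intro!: sum.cong\<close>)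

lemma dval_cong:
  assumes "\<forall>i\<in>N. \<forall>j\<in>N. P i j = P' i j" "\<forall>i\<in>N. c i = c' i" "i \<in> N"
  shows "dval N \<beta> P c i = dval N \<beta> P' c' i"
  using stepop_funpow_cong[OF assms] by (simp add: dval_def)

lemma stepop_funpow_mono:
  assumes "stochastic N P" "\<forall>j\<in>N. f j \<le> g j" "i \<in> N"
  shows "(stepop N P ^^ t) f i \<le> (stepop N P ^^ t) g i"
  using assms(3) by (induction t arbitrary: i)
    (use assms(1,2) in \<open>simp_all add: stepop_def stochastic_def sum_mono mult_left_mono\<close>)

lemma stepop_funpow_abs_le:
  assumes "stochastic N P" "\<forall>j\<in>N. \<bar>f j\<bar> \<le> M" "i \<in> N"
  shows "\<bar>(stepop N P ^^ t) f i\<bar> \<le> M"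
  using assms(3)
proof (induction t arbitrary: i)
  case 0
  then show ?case using assms(2) by simp
next
  case (Suc t)
  have "\<bar>(stepop N P ^^ Suc t) f i\<bar> \<le> (\<Sum>j\<in>N. \<bar>P i j * (stepop N P ^^ t) f j\<bar>)"
    by (simp add: stepop_def sum_abs)
  also have "\<dots> \<le> (\<Sum>j\<in>N. P i j * M)"
    using Suc.IH assms(1) Suc.prems
    by (intro sum_mono) (auto simp: stochastic_def abs_mult intro: mult_left_mono)
  also have "\<dots> = M"
    using assms(1) Suc.prems by (simp add: stochastic_def flip: sum_distrib_right)
  finally show ?case .
qed

locale discounted_chain =
  fixes N :: "'a set" and P :: "'a \<Rightarrow> 'a \<Rightarrow> real" and \<beta> :: real
  assumes finite_N: "finite N" and stochastic: "stochastic N P"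
    and discount: "0 \<le> \<beta>" "\<beta> < 1"
begin

lemma discounted_term_bound:
  assumes "i \<in> N"
  shows "\<bar>\<beta> ^ t * (stepop N P ^^ t) f i\<bar> \<le> (\<Sum>j\<in>N. \<bar>f j\<bar>) * \<beta> ^ t"
proof -
  have "\<forall>j\<in>N. \<bar>f j\<bar> \<le> (\<Sum>j\<in>N. \<bar>f j\<bar>)"
    using finite_N by (auto intro: member_le_sum)
  from stepop_funpow_abs_le[OF stochastic this assms] show ?thesis
    using discount by (auto simp: abs_mult mult.commute intro!: mult_left_mono)
qed

lemma summable_dval:
  assumes "i \<in> N"
  shows "summable (\<lambda>t. \<beta> ^ t * (stepop N P ^^ t) f i)"
  by (rule summable_comparison_test[of _ "\<lambda>t. (\<Sum>j\<in>N. \<bar>f j\<bar>) * \<beta> ^ t"])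
    (use discounted_term_bound[OF assms] discount in \<open>auto intro: summable_mult summable_geometric\<close>)

lemma dval_linear:
  assumes "i \<in> N"
  shows "dval N \<beta> P (\<lambda>i. a * f i + b * g i) i = a * dval N \<beta> P f i + b * dval N \<beta> P g i"
proof -
  have "dval N \<beta> P (\<lambda>i. a * f i + b * g i) i
      = (\<Sum>t. a * (\<beta> ^ t * (stepop N P ^^ t) f i) + b * (\<beta> ^ t * (stepop N P ^^ t) g i))"
    unfolding dval_def stepop_funpow_linear by (simp add: algebra_simps)
  also have "\<dots> = a * dval N \<beta> P f i + b * dval N \<beta> P g i"
    unfolding dval_def using summable_dval[OF assms]
    by (simp add: suminf_add[symmetric] suminf_mult summable_mult)
  finally show ?thesis .
qed

lemma dval_bellman:
  assumes "i \<in> N"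
  shows "dval N \<beta> P c i = c i + \<beta> * stepop N P (dval N \<beta> P c) i"
proof -
  let ?X = "\<lambda>j t. \<beta> ^ t * (stepop N P ^^ t) c j"
  have "dval N \<beta> P c i = ?X i 0 + (\<Sum>t. ?X i (Suc t))"
    unfolding dval_def using suminf_split_head[OF summable_dval[OF assms]] by simp
  also have "(\<Sum>t. ?X i (Suc t)) = (\<Sum>t. \<Sum>j\<in>N. \<beta> * P i j * ?X j t)"
    by (simp add: stepop_def sum_distrib_left algebra_simps)
  also have "\<dots> = (\<Sum>j\<in>N. \<Sum>t. \<beta> * P i j * ?X j t)"
    by (intro suminf_sum summable_mult summable_dval)
  also have "\<dots> = \<beta> * stepop N P (dval N \<beta> P c) i"
    by (simp add: stepop_def dval_def sum_distrib_left suminf_mult summable_dval algebra_simps)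
  finally show ?thesis by simp
qed

text \<open>Iterating the inequality T times bounds g by a partial sum of dval plus a remainder of
  order \<beta>^T.\<close>
lemma subsolution_le_dval:
  assumes sub: "\<forall>i\<in>N. g i \<le> c i + \<beta> * stepop N P g i" and i: "i \<in> N"
  shows "g i \<le> dval N \<beta> P c i"
proof -
  have iter: "g i \<le> (\<Sum>t<T. \<beta> ^ t * (stepop N P ^^ t) c i) + \<beta> ^ T * (stepop N P ^^ T) g i"
    if "i \<in> N" for T i
    using that
  proof (induction T arbitrary: i)
    case 0
    then show ?case by simp
  next
    case (Suc T)
    have "(stepop N P ^^ T) g i \<le> (stepop N P ^^ T) (\<lambda>j. 1 * c j + \<beta> * stepop N P g j) i"
      using stepop_funpow_mono[OF stochastic _ Suc.prems] sub by simp
    also have "\<dots> = (stepop N P ^^ T) c i + \<beta> * (stepop N P ^^ Suc T) g i"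
      unfolding stepop_funpow_linear funpow_Suc_right by simp
    finally have "\<beta> ^ T * (stepop N P ^^ T) g i
        \<le> \<beta> ^ T * ((stepop N P ^^ T) c i + \<beta> * (stepop N P ^^ Suc T) g i)"
      using discount by (intro mult_left_mono) auto
    then show ?case
      using Suc.IH[OF Suc.prems] by (simp add: algebra_simps del: funpow.simps)
  qed
  have "(\<lambda>T. (\<Sum>t<T. \<beta> ^ t * (stepop N P ^^ t) c i) + \<beta> ^ T * (stepop N P ^^ T) g i)
      \<longlonglongrightarrow> dval N \<beta> P c i + 0"
  proof (intro tendsto_add)
    show "(\<lambda>T. \<Sum>t<T. \<beta> ^ t * (stepop N P ^^ t) c i) \<longlonglongrightarrow> dval N \<beta> P c i"
      unfolding dval_def by (intro summable_LIMSEQ summable_dval i)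
    show "(\<lambda>T. \<beta> ^ T * (stepop N P ^^ T) g i) \<longlonglongrightarrow> 0"
      by (rule Lim_null_comparison[of _ "\<lambda>T. (\<Sum>j\<in>N. \<bar>g j\<bar>) * \<beta> ^ T"])
        (use discounted_term_bound[OF i] discount
          in \<open>auto intro!: tendsto_mult_right_zero LIMSEQ_power_zero\<close>)
  qed
  then show ?thesis using LIMSEQ_le_const iter[OF i] by fastforce
qed

lemma fixpoint_eq_dval:
  assumes fixpoint: "\<forall>i\<in>N. g i = c i + \<beta> * stepop N P g i" and i: "i \<in> N"
  shows "g i = dval N \<beta> P c i"
proof (rule antisym)
  show "g i \<le> dval N \<beta> P c i"
    using subsolution_le_dval fixpoint eq_refl i by blast
  have "\<forall>i\<in>N. - g i \<le> - c i + \<beta> * stepop N P (\<lambda>j. - g j) i"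
  proof
    fix j assume "j \<in> N"
    have "stepop N P (\<lambda>j. - g j) j = - stepop N P g j"
      by (simp add: stepop_def sum_negf)
    then show "- g j \<le> - c j + \<beta> * stepop N P (\<lambda>j. - g j) j"
      using fixpoint \<open>j \<in> N\<close> by simp
  qed
  from subsolution_le_dval[OF this i] have "- g i \<le> dval N \<beta> P (\<lambda>j. - c j) i" .
  also have "\<dots> = - dval N \<beta> P c i"
    using dval_linear[OF i, of "-1" c 0 c] by simp
  finally show "dval N \<beta> P c i \<le> g i" by simp
qed

end

lemma set_system_top:
  assumes "set_system N01 F" "finite N01"
  shows "N01 \<in> F"
proof -
  have "finite F" "F \<noteq> {}"
    using assms by (auto simp: set_system_def intro: finite_subset)
  then obtain S where S: "S \<in> F" and maximal: "\<forall>T\<in>F. S \<subseteq> T \<longrightarrow> S = T"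
    using finite_has_maximal by blast
  show ?thesis
  proof (rule ccontr)
    assume "N01 \<notin> F"
    with S assms(1) obtain j where "j \<notin> S" "insert j S \<in> F"
      unfolding set_system_def by (metis Diff_iff)
    with maximal show False by blast
  qed
qed

lemma ag_set_Suc: "1 \<le> k \<Longrightarrow> ag_set N01 \<pi> (Suc k) = ag_set N01 \<pi> k - {\<pi> k}"
  by (auto simp: ag_set_def less_Suc_eq)

lemma ag_nu_Suc: "ag_nu y (Suc k) = ag_nu y k + y (Suc k)"
  by (simp add: ag_nu_def)

context
  fixes N01 F w c \<pi> y
  assumes greedy: "adaptive_greedy N01 F w c \<pi> y"
begin

lemma adaptive_greedy_choice:
  assumes "k \<in> {1..card N01}"
  shows "\<pi> k \<in> N01 - \<pi> ` {1..<k}" "ag_set N01 \<pi> k - {\<pi> k} \<in> F"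
  using greedy assms by (auto simp: adaptive_greedy_def bdry_def ag_set_def)

lemma adaptive_greedy_bij:
  assumes "finite N01"
  shows "bij_betw \<pi> {1..card N01} N01"
proof -
  have inj: "inj_on \<pi> {1..card N01}"
  proof (rule linorder_inj_onI')
    fix a b assume "a \<in> {1..card N01}" "b \<in> {1..card N01}" "a < b"
    then have "\<pi> a \<in> \<pi> ` {1..<b}" by auto
    then show "\<pi> a \<noteq> \<pi> b"
      using adaptive_greedy_choice(1)[of b] \<open>b \<in> {1..card N01}\<close> by auto
  qed
  moreover have "\<pi> ` {1..card N01} = N01"
    using adaptive_greedy_choice(1) card_image[OF inj] assms
    by (intro card_subset_eq) auto
  ultimately show ?thesis by (simp add: bij_betw_def)
qed

lemma ag_set_eq_image:
  assumes "finite N01" "k \<in> {1..card N01 + 1}"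
  shows "ag_set N01 \<pi> k = \<pi> ` {k..card N01}"
proof -
  have bij: "bij_betw \<pi> {1..card N01} N01" by (rule adaptive_greedy_bij[OF assms(1)])
  have "ag_set N01 \<pi> k = \<pi> ` {1..card N01} - \<pi> ` {1..<k}"
    using bij by (simp add: ag_set_def bij_betw_def)
  also have "\<dots> = \<pi> ` ({1..card N01} - {1..<k})"
    using bij assms(2) by (intro inj_on_image_set_diff[symmetric]) (auto simp: bij_betw_def)
  also have "{1..card N01} - {1..<k} = {k..card N01}" using assms(2) by auto
  finally show ?thesis .
qed

lemma ag_set_in_family:
  assumes "set_system N01 F" "finite N01" "k \<in> {1..card N01 + 1}"
  shows "ag_set N01 \<pi> k \<in> F"
  using assms(3)
proof (induction k)
  case 0
  then show ?case by simp
next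
  case (Suc k)
  show ?case
  proof (cases "k = 0")
    case True
    then show ?thesis using set_system_top[OF assms(1,2)] by (simp add: ag_set_def)
  next
    case False
    then show ?thesis
      using Suc.prems adaptive_greedy_choice(2)[of k] ag_set_Suc[of k N01 \<pi>] by simp
  qed
qed

lemma adaptive_greedy_cost_decomposition:
  assumes "m \<in> {1..card N01}" "w (ag_set N01 \<pi> m) (\<pi> m) \<noteq> 0"
  shows "(\<Sum>l\<in>{1..m}. y l * w (ag_set N01 \<pi> l) (\<pi> m)) = c (\<pi> m)"
proof -
  have "y m = ag_ratio N01 w c \<pi> y m (\<pi> m)"
    using greedy assms(1) by (simp add: adaptive_greedy_def)
  then have "y m * w (ag_set N01 \<pi> m) (\<pi> m)
      = c (\<pi> m) - (\<Sum>l\<in>{1..<m}. y l * w (ag_set N01 \<pi> l) (\<pi> m))"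
    using assms(2) by (simp add: ag_ratio_def)
  moreover have "{1..m} = insert m {1..<m}" using assms(1) by auto
  ultimately show ?thesis by simp
qed

end

lemma concave_on_lower_envelope:
  fixes f :: "real \<Rightarrow> real" and a b :: "'i \<Rightarrow> real"
  assumes below: "\<And>x k. f x \<le> a k + b k * x" and attained: "\<And>x. \<exists>k. f x = a k + b k * x"
  shows "concave_on UNIV f"
  unfolding concave_on_iff
proof (intro conjI ballI allI impI)
  fix x z s t :: real
  assume st: "0 \<le> s" "0 \<le> t" "s + t = 1"
  obtain k where k: "f (s *\<^sub>R x + t *\<^sub>R z) = a k + b k * (s * x + t * z)"
    using attained by auto
  have "s * f x + t * f z \<le> s * (a k + b k * x) + t * (a k + b k * z)"
    using below st by (intro add_mono mult_left_mono) auto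
  also have "\<dots> = (s + t) * a k + b k * (s * x + t * z)"
    by (simp add: algebra_simps)
  also have "\<dots> = a k + b k * (s * x + t * z)"
    using st(3) by simp
  finally show "s * f x + t * f z \<le> f (s *\<^sub>R x + t *\<^sub>R z)"
    using k by simp
qed simp

lemma continuous_on_concave:
  fixes f :: "'a::euclidean_space \<Rightarrow> real"
  assumes "open S" "concave_on S f"
  shows "continuous_on S f"
  using continuous_on_minus[OF convex_on_continuous[OF assms(1)], of "\<lambda>x. - f x"] assms(2)
  by (simp add: concave_on_def)

locale restless_bandit =
  fixes N N01 N1 :: "'a set" and \<beta> :: real
    and p0 p1 :: "'a \<Rightarrow> 'a \<Rightarrow> real" and h0 h1 \<theta> :: "'a \<Rightarrow> real"
  assumes finite_N: "finite N" and states: "N = N01 \<union> N1"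
    and discount: "0 \<le> \<beta>" "\<beta> < 1"
    and stochastic_p0: "stochastic N p0" and stochastic_p1: "stochastic N p1"
begin

definition charge_value :: "('a \<Rightarrow> real) \<Rightarrow> real \<Rightarrow> 'a \<Rightarrow> real" where
  "charge_value u \<nu> i = vpol N \<beta> p0 p1 h0 h1 u i + \<nu> * bpol N \<beta> p0 p1 \<theta> u i"

abbreviation set_value :: "'a set \<Rightarrow> real \<Rightarrow> 'a \<Rightarrow> real" where
  "set_value S \<equiv> charge_value (sact N1 S)"

definition active_op :: "real \<Rightarrow> ('a \<Rightarrow> real) \<Rightarrow> 'a \<Rightarrow> real" where
  "active_op \<nu> g i = h1 i + \<nu> * \<theta> i + \<beta> * (\<Sum>j\<in>N. p1 i j * g j)"

definition passive_op :: "('a \<Rightarrow> real) \<Rightarrow> 'a \<Rightarrow> real" where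
  "passive_op g i = h0 i + \<beta> * (\<Sum>j\<in>N. p0 i j * g j)"

definition bellman_gap :: "'a set \<Rightarrow> real \<Rightarrow> 'a \<Rightarrow> real" where
  "bellman_gap S \<nu> j = active_op \<nu> (set_value S \<nu>) j - passive_op (set_value S \<nu>) j"

lemma discounted_chain_policy:
  assumes "\<forall>i\<in>N. 0 \<le> u i \<and> u i \<le> 1"
  shows "discounted_chain N (pmat p0 p1 u) \<beta>"
proof
  show "stochastic N (pmat p0 p1 u)"
    using assms stochastic_p0 stochastic_p1
    by (auto simp: stochastic_def pmat_def sum.distrib simp flip: sum_distrib_left)
qed (use finite_N discount in auto)

lemma policy_step_split:
  "hcost h0 h1 u i + \<nu> * (\<theta> i * u i) + \<beta> * stepop N (pmat p0 p1 u) g i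
     = u i * active_op \<nu> g i + (1 - u i) * passive_op g i"
proof -
  have "stepop N (pmat p0 p1 u) g i
      = u i * (\<Sum>j\<in>N. p1 i j * g j) + (1 - u i) * (\<Sum>j\<in>N. p0 i j * g j)"
    by (simp add: stepop_def pmat_def sum_distrib_left sum.distrib[symmetric] algebra_simps)
  then show ?thesis
    unfolding hcost_def active_op_def passive_op_def by (simp only:) (simp add: algebra_simps)
qed

context
  fixes u :: "'a \<Rightarrow> real"
  assumes u_range: "\<forall>i\<in>N. 0 \<le> u i \<and> u i \<le> 1"
begin

interpretation chain: discounted_chain N "pmat p0 p1 u" \<beta>
  by (rule discounted_chain_policy[OF u_range])

lemma charge_value_dval:
  assumes "i \<in> N"
  shows "charge_value u \<nu> i
    = dval N \<beta> (pmat p0 p1 u) (\<lambda>i. hcost h0 h1 u i + \<nu> * (\<theta> i * u i)) i"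
  using chain.dval_linear[OF assms, of 1 "hcost h0 h1 u" \<nu>]
  by (simp add: charge_value_def vpol_def bpol_def)

lemma charge_value_bellman:
  assumes "i \<in> N"
  shows "charge_value u \<nu> i
     = u i * active_op \<nu> (charge_value u \<nu>) i + (1 - u i) * passive_op (charge_value u \<nu>) i"
proof -
  let ?c = "\<lambda>i. hcost h0 h1 u i + \<nu> * (\<theta> i * u i)"
  have "charge_value u \<nu> i = dval N \<beta> (pmat p0 p1 u) ?c i"
    by (rule charge_value_dval[OF assms])
  also have "\<dots> = ?c i + \<beta> * stepop N (pmat p0 p1 u) (dval N \<beta> (pmat p0 p1 u) ?c) i"
    by (rule chain.dval_bellman[OF assms])
  also have "stepop N (pmat p0 p1 u) (dval N \<beta> (pmat p0 p1 u) ?c) i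
      = stepop N (pmat p0 p1 u) (charge_value u \<nu>) i"
    by (simp add: stepop_def charge_value_dval)
  finally show ?thesis by (simp only: policy_step_split)
qed

lemma subsolution_le_charge_value:
  assumes "\<forall>i\<in>N. g i \<le> u i * active_op \<nu> g i + (1 - u i) * passive_op g i" "i \<in> N"
  shows "g i \<le> charge_value u \<nu> i"
proof -
  have "\<forall>i\<in>N. g i \<le> (hcost h0 h1 u i + \<nu> * (\<theta> i * u i)) + \<beta> * stepop N (pmat p0 p1 u) g i"
    using assms(1) by (simp only: policy_step_split)
  from chain.subsolution_le_dval[OF this assms(2)] show ?thesis
    by (simp only: charge_value_dval[OF assms(2)])
qed

lemma fixpoint_eq_charge_value:
  assumes "\<forall>i\<in>N. g i = u i * active_op \<nu> g i + (1 - u i) * passive_op g i" "i \<in> N"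
  shows "g i = charge_value u \<nu> i"
proof -
  have "\<forall>i\<in>N. g i = (hcost h0 h1 u i + \<nu> * (\<theta> i * u i)) + \<beta> * stepop N (pmat p0 p1 u) g i"
    using assms(1) by (simp only: policy_step_split)
  from chain.fixpoint_eq_dval[OF this assms(2)] show ?thesis
    by (simp only: charge_value_dval[OF assms(2)])
qed

end

lemma sact_range: "\<forall>i\<in>N. 0 \<le> sact N1 S i \<and> sact N1 S i \<le> 1"
  by (simp add: sact_def)

lemma set_value_bellman:
  "i \<in> N \<Longrightarrow> set_value S \<nu> i
     = (if i \<in> S \<union> N1 then active_op \<nu> (set_value S \<nu>) i else passive_op (set_value S \<nu>) i)"
  using charge_value_bellman[OF sact_range] sact_def[of N1 S i] by simp

text \<open>The sign conditions make set_value S a solution of the Bellman optimality equation,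
  hence a subsolution of the Bellman equation of every admissible policy.\<close>
lemma set_value_optimal:
  assumes gap: "\<forall>j\<in>N01. (j \<in> S \<longrightarrow> bellman_gap S \<nu> j \<le> 0) \<and> (j \<notin> S \<longrightarrow> 0 \<le> bellman_gap S \<nu> j)"
    and u: "u \<in> policies N N1" and i: "i \<in> N"
  shows "set_value S \<nu> i \<le> charge_value u \<nu> i"
proof (rule subsolution_le_charge_value)
  show u_range: "\<forall>i\<in>N. 0 \<le> u i \<and> u i \<le> 1" using u by (simp add: policies_def)
  show "\<forall>i\<in>N. set_value S \<nu> i
      \<le> u i * active_op \<nu> (set_value S \<nu>) i + (1 - u i) * passive_op (set_value S \<nu>) i"
  proof
    fix i assume i: "i \<in> N"
    let ?g = "set_value S \<nu>"
    have controllable: "i \<notin> N1 \<Longrightarrow> i \<in> N01" using i states by blast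
    have le_active: "?g i \<le> active_op \<nu> ?g i"
      using set_value_bellman[OF i] gap controllable by (auto simp: bellman_gap_def)
    show "?g i \<le> u i * active_op \<nu> ?g i + (1 - u i) * passive_op ?g i"
    proof (cases "i \<in> N1")
      case True
      then show ?thesis using u i le_active by (simp add: policies_def)
    next
      case False
      then have "?g i \<le> passive_op ?g i"
        using set_value_bellman[OF i] gap controllable by (auto simp: bellman_gap_def)
      then have "u i * ?g i + (1 - u i) * ?g i
          \<le> u i * active_op \<nu> ?g i + (1 - u i) * passive_op ?g i"
        using le_active u_range i by (intro add_mono mult_left_mono) auto
      then show ?thesis by (simp add: algebra_simps)
    qed
  qed
qed (use i in simp)

lemma set_value_remove_indifferent:
  assumes "bellman_gap S \<nu> p = 0" "i \<in> N"
  shows "set_value (S - {p}) \<nu> i = set_value S \<nu> i"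
proof (rule fixpoint_eq_charge_value[OF sact_range, symmetric])
  show "\<forall>i\<in>N. set_value S \<nu> i = sact N1 (S - {p}) i * active_op \<nu> (set_value S \<nu>) i
      + (1 - sact N1 (S - {p}) i) * passive_op (set_value S \<nu>) i"
    using set_value_bellman assms(1) by (auto simp: sact_def bellman_gap_def)
qed (use assms(2) in simp)

lemma bellman_gap_affine:
  assumes "j \<in> N01"
  shows "bellman_gap S \<nu> j = bellman_gap S 0 j + \<nu> * workload N N01 N1 \<beta> p0 p1 \<theta> S j"
  using assms
  by (simp add: bellman_gap_def active_op_def passive_op_def charge_value_def workload_def
      sum.distrib sum_subtractf sum_distrib_left algebra_simps)

lemma bellman_gap_all_active:
  assumes j: "j \<in> N01"
  shows "bellman_gap N01 0 j = - hhat0 N \<beta> p0 p1 h0 h1 j"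
proof -
  interpret p1_chain: discounted_chain N p1 \<beta>
    using finite_N stochastic_p1 discount by unfold_locales
  let ?x = "dval N \<beta> p1 h1"
  have "set_value N01 0 k = ?x k" if "k \<in> N" for k
    unfolding charge_value_def vpol_def
    by (simp, rule dval_cong) (use that states in \<open>auto simp: pmat_def hcost_def sact_def\<close>)
  moreover have "?x j = h1 j + \<beta> * (\<Sum>k\<in>N. p1 j k * ?x k)"
    using p1_chain.dval_bellman j states by (simp add: stepop_def)
  ultimately show ?thesis
    by (simp add: bellman_gap_def active_op_def passive_op_def hhat0_def Let_def)
qed

end

locale pcl_indexable_bandit = restless_bandit +
  fixes F :: "'a set set" and \<pi> :: "nat \<Rightarrow> 'a" and y :: "nat \<Rightarrow> real"
  assumes family: "set_system N01 F"
    and pcl: "pcl_indexable N N01 N1 F \<beta> p0 p1 h0 h1 \<theta> \<pi> y"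
begin

abbreviation n :: nat where "n \<equiv> card N01"

abbreviation greedy_set :: "nat \<Rightarrow> 'a set" where "greedy_set k \<equiv> ag_set N01 \<pi> k"

abbreviation w :: "'a set \<Rightarrow> 'a \<Rightarrow> real" where "w \<equiv> workload N N01 N1 \<beta> p0 p1 \<theta>"

abbreviation hh :: "'a \<Rightarrow> real" where "hh \<equiv> hhat0 N \<beta> p0 p1 h0 h1"

lemma finite_N01: "finite N01"
  using finite_N states by simp

lemma greedy: "adaptive_greedy N01 F w hh \<pi> y"
  using pcl by (simp add: pcl_indexable_def)

lemma greedy_choice_bij: "bij_betw \<pi> {1..n} N01"
  by (rule adaptive_greedy_bij[OF greedy finite_N01])

lemma workload_greedy_set_pos:
  assumes "k \<in> {1..n + 1}" "j \<in> N01"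
  shows "0 < w (greedy_set k) j"
  using pcl ag_set_in_family[OF greedy family finite_N01 assms(1)] assms(2)
  by (simp add: pcl_indexable_def)

lemma greedy_increment_nonneg:
  assumes "2 \<le> l" "l \<le> n"
  shows "0 \<le> y l"
proof -
  have "\<forall>k\<in>{1..<n}. ag_nu y k \<le> ag_nu y (Suc k)"
    using pcl by (simp add: pcl_indexable_def)
  then have "ag_nu y (l - 1) \<le> ag_nu y (Suc (l - 1))"
    by (rule bspec) (use assms in auto)
  then show ?thesis using ag_nu_Suc[of y "l - 1"] assms by simp
qed

lemma greedy_cost_decomposition:
  assumes "m \<in> {1..n}"
  shows "(\<Sum>l\<in>{1..<Suc m}. y l * w (greedy_set l) (\<pi> m)) = hh (\<pi> m)"
  using adaptive_greedy_cost_decomposition[OF greedy assms] assms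
    workload_greedy_set_pos[of m "\<pi> m"] greedy_choice_bij
  by (simp add: atLeastLessThanSuc_atLeastAtMost bij_betwE)

text \<open>At \<nu>_{\<pi>_k} the gap of \<pi>_k vanishes, so removing \<pi>_k does not change the value there;
  affinity in \<nu> then propagates the formula from S_k to S_{k+1}.\<close>
lemma bellman_gap_greedy_set:
  assumes "1 \<le> k" "k \<le> n + 1" "j \<in> N01"
  shows "bellman_gap (greedy_set k) \<nu> j
    = (\<Sum>l\<in>{1..<k}. y l * w (greedy_set l) j) + (\<nu> - ag_nu y (k - 1)) * w (greedy_set k) j - hh j"
  using assms
proof (induction k arbitrary: \<nu> j rule: nat_induct_at_least)
  case base
  then show ?case
    using bellman_gap_affine[of j N01 \<nu>] bellman_gap_all_active[of j]
    by (simp add: ag_set_def ag_nu_def)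
next
  case (Suc k)
  let ?\<nu> = "ag_nu y k"
  have k: "k \<in> {1..n}" and \<pi>k: "\<pi> k \<in> N01"
    using Suc.hyps Suc.prems greedy_choice_bij by (auto dest: bij_betwE)
  have increment: "?\<nu> - ag_nu y (k - 1) = y k"
    using ag_nu_Suc[of y "k - 1"] Suc.hyps by simp
  have sum_Suc: "(\<Sum>l\<in>{1..<Suc k}. y l * w (greedy_set l) j)
      = (\<Sum>l\<in>{1..<k}. y l * w (greedy_set l) j) + y k * w (greedy_set k) j" for j
    using Suc.hyps by simp
  have "bellman_gap (greedy_set k) ?\<nu> (\<pi> k) = 0"
    using Suc.IH[of "\<pi> k" ?\<nu>] Suc.hyps Suc.prems \<pi>k greedy_cost_decomposition[OF k] increment
    by simp
  then have "\<forall>i\<in>N. set_value (greedy_set (Suc k)) ?\<nu> i = set_value (greedy_set k) ?\<nu> i"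
    using set_value_remove_indifferent ag_set_Suc[of k N01 \<pi>] Suc.hyps by simp
  then have "bellman_gap (greedy_set (Suc k)) ?\<nu> j = bellman_gap (greedy_set k) ?\<nu> j"
    by (simp add: bellman_gap_def active_op_def passive_op_def)
  then have "bellman_gap (greedy_set (Suc k)) \<nu> j
      = bellman_gap (greedy_set k) ?\<nu> j + (\<nu> - ?\<nu>) * w (greedy_set (Suc k)) j"
    using bellman_gap_affine[OF Suc.prems(2), of _ \<nu>] bellman_gap_affine[OF Suc.prems(2), of _ ?\<nu>]
    by (simp add: algebra_simps)
  also have "bellman_gap (greedy_set k) ?\<nu> j
      = (\<Sum>l\<in>{1..<k}. y l * w (greedy_set l) j) + y k * w (greedy_set k) j - hh j"
    using Suc.IH[of j ?\<nu>] Suc.hyps Suc.prems increment by simp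
  finally show ?case using sum_Suc[of j] by simp
qed

definition index_interval :: "nat \<Rightarrow> real set" where
  "index_interval k = {\<nu>. (2 \<le> k \<longrightarrow> ag_nu y (k - 1) \<le> \<nu>) \<and> (k \<le> n \<longrightarrow> \<nu> \<le> ag_nu y k)}"

lemma mem_greedy_set_iff:
  assumes "m \<in> {1..n}" "k \<in> {1..n + 1}"
  shows "\<pi> m \<in> greedy_set k \<longleftrightarrow> k \<le> m"
proof -
  have "\<pi> m \<in> \<pi> ` {k..n} \<longleftrightarrow> m \<in> {k..n}"
    using greedy_choice_bij assms
    by (intro inj_on_image_mem_iff[of _ "{1..n}"]) (auto simp: bij_betw_def)
  then show ?thesis using ag_set_eq_image[OF greedy finite_N01 assms(2)] assms(1) by auto
qed

lemma bellman_gap_greedy_set_sign: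
  assumes k: "k \<in> {1..n + 1}" and \<nu>: "\<nu> \<in> index_interval k" and j: "j \<in> N01"
  shows "(j \<in> greedy_set k \<longrightarrow> bellman_gap (greedy_set k) \<nu> j \<le> 0)
       \<and> (j \<notin> greedy_set k \<longrightarrow> 0 \<le> bellman_gap (greedy_set k) \<nu> j)"
proof -
  obtain m where m: "m \<in> {1..n}" "j = \<pi> m"
    using j greedy_choice_bij unfolding bij_betw_def by blast
  let ?T = "\<lambda>a b. \<Sum>l\<in>{a..<b}. y l * w (greedy_set l) j"
  have T_nonneg: "0 \<le> ?T a b" if "2 \<le> a" "b \<le> n + 1" for a b
    using that greedy_increment_nonneg workload_greedy_set_pos[OF _ j]
    by (intro sum_nonneg mult_nonneg_nonneg) (auto intro: less_imp_le)
  have T_split: "?T a c = ?T a b + ?T b c" if "a \<le> b" "b \<le> c" for a b c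
    using that by (simp add: sum.atLeastLessThan_concat)
  have gap: "bellman_gap (greedy_set k) \<nu> j
      = ?T 1 k + (\<nu> - ag_nu y (k - 1)) * w (greedy_set k) j - ?T 1 (Suc m)"
    using bellman_gap_greedy_set[of k j \<nu>] greedy_cost_decomposition[OF m(1)] k j m(2) by simp
  have w_pos: "0 < w (greedy_set k) j" by (rule workload_greedy_set_pos[OF k j])
  show ?thesis
  proof (cases "k \<le> m")
    case True
    have "ag_nu y k = ag_nu y (k - 1) + y k"
      using ag_nu_Suc[of y "k - 1"] k by simp
    moreover have "?T 1 (Suc m) = ?T 1 k + y k * w (greedy_set k) j + ?T (Suc k) (Suc m)"
      using T_split[of 1 k "Suc m"] T_split[of k "Suc k" "Suc m"] k True by simp
    moreover have "(\<nu> - ag_nu y k) * w (greedy_set k) j \<le> 0"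
      using \<nu> True m w_pos by (intro mult_nonpos_nonneg) (auto simp: index_interval_def)
    moreover have "0 \<le> ?T (Suc k) (Suc m)" by (rule T_nonneg) (use k m in auto)
    ultimately have "bellman_gap (greedy_set k) \<nu> j \<le> 0"
      unfolding gap by (simp add: algebra_simps)
    then show ?thesis using mem_greedy_set_iff[OF m(1) k] True m(2) by simp
  next
    case False
    have "?T 1 k = ?T 1 (Suc m) + ?T (Suc m) k"
      using T_split[of 1 "Suc m" k] False m by simp
    moreover have "0 \<le> (\<nu> - ag_nu y (k - 1)) * w (greedy_set k) j"
      using \<nu> False m w_pos by (intro mult_nonneg_nonneg) (auto simp: index_interval_def)
    moreover have "0 \<le> ?T (Suc m) k" by (rule T_nonneg) (use k m in auto)
    ultimately have "0 \<le> bellman_gap (greedy_set k) \<nu> j"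
      unfolding gap by simp
    then show ?thesis using mem_greedy_set_iff[OF m(1) k] False m(2) by simp
  qed
qed

abbreviation v_opt :: "'a \<Rightarrow> real \<Rightarrow> real" where
  "v_opt \<equiv> vopt N N1 \<beta> p0 p1 h0 h1 \<theta>"

lemma set_value_greedy_set_optimal:
  assumes "k \<in> {1..n + 1}" "\<nu> \<in> index_interval k" "u \<in> policies N N1" "i \<in> N"
  shows "set_value (greedy_set k) \<nu> i \<le> charge_value u \<nu> i"
  using set_value_optimal[OF _ assms(3,4)] bellman_gap_greedy_set_sign[OF assms(1,2)] by blast

lemma v_opt_eq_set_value_greedy_set:
  assumes "k \<in> {1..n + 1}" "\<nu> \<in> index_interval k" "i \<in> N"
  shows "v_opt i \<nu> = set_value (greedy_set k) \<nu> i"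
  unfolding vopt_def
proof (rule cInf_eq_minimum)
  show "set_value (greedy_set k) \<nu> i
      \<in> (\<lambda>u. vpol N \<beta> p0 p1 h0 h1 u i + \<nu> * bpol N \<beta> p0 p1 \<theta> u i) ` policies N N1"
    by (rule image_eqI[of _ _ "sact N1 (greedy_set k)"])
      (auto simp: charge_value_def policies_def sact_def)
next
  fix x assume "x \<in> (\<lambda>u. vpol N \<beta> p0 p1 h0 h1 u i + \<nu> * bpol N \<beta> p0 p1 \<theta> u i) ` policies N N1"
  then show "set_value (greedy_set k) \<nu> i \<le> x"
    using set_value_greedy_set_optimal[OF assms(1,2) _ assms(3)] by (auto simp: charge_value_def)
qed

lemma index_interval_cover: "\<exists>k\<in>{1..n + 1}. \<nu> \<in> index_interval k"
proof (cases "\<exists>k\<in>{1..n}. \<nu> \<le> ag_nu y k")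
  case True
  define k where "k = (LEAST k. k \<in> {1..n} \<and> \<nu> \<le> ag_nu y k)"
  have k: "k \<in> {1..n}" "\<nu> \<le> ag_nu y k"
    using LeastI_ex[of "\<lambda>k. k \<in> {1..n} \<and> \<nu> \<le> ag_nu y k"] True unfolding k_def by blast+
  have "ag_nu y (k - 1) \<le> \<nu>" if "2 \<le> k"
    using not_less_Least[of "k - 1" "\<lambda>k. k \<in> {1..n} \<and> \<nu> \<le> ag_nu y k"] that k
    unfolding k_def by auto
  with k show ?thesis by (intro bexI[of _ k]) (auto simp: index_interval_def)
next
  case False
  then have "ag_nu y n \<le> \<nu>" if "1 \<le> n"
    using that by (meson atLeastAtMost_iff le_refl nle_le)
  then have "\<nu> \<in> index_interval (n + 1)"
    by (simp add: index_interval_def)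
  then show ?thesis by auto
qed

lemma v_opt_le_set_value:
  assumes "i \<in> N"
  shows "v_opt i \<nu> \<le> set_value S \<nu> i"
proof -
  obtain k where "k \<in> {1..n + 1}" "\<nu> \<in> index_interval k"
    using index_interval_cover by blast
  moreover have "sact N1 S \<in> policies N N1"
    by (simp add: policies_def sact_def)
  ultimately show ?thesis
    using v_opt_eq_set_value_greedy_set set_value_greedy_set_optimal assms by simp
qed

lemma v_opt_eq_Min:
  assumes "i \<in> N"
  shows "v_opt i \<nu> = Min ((\<lambda>k. set_value (greedy_set k) \<nu> i) ` {1..n + 1})"
proof (rule Min_eqI[symmetric])
  obtain k where "k \<in> {1..n + 1}" "\<nu> \<in> index_interval k"
    using index_interval_cover by blast
  then show "v_opt i \<nu> \<in> (\<lambda>k. set_value (greedy_set k) \<nu> i) ` {1..n + 1}"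
    using v_opt_eq_set_value_greedy_set assms by auto
qed (use v_opt_le_set_value assms in auto)

lemma concave_v_opt:
  assumes "i \<in> N"
  shows "concave_on UNIV (v_opt i)"
proof (rule concave_on_lower_envelope)
  show "v_opt i \<nu> \<le> vpol N \<beta> p0 p1 h0 h1 (sact N1 S) i + bpol N \<beta> p0 p1 \<theta> (sact N1 S) i * \<nu>"
    for \<nu> S
    using v_opt_le_set_value[OF assms] by (simp add: charge_value_def mult.commute)
  show "\<exists>S. v_opt i \<nu> = vpol N \<beta> p0 p1 h0 h1 (sact N1 S) i + bpol N \<beta> p0 p1 \<theta> (sact N1 S) i * \<nu>"
    for \<nu>
    using index_interval_cover v_opt_eq_set_value_greedy_set[OF _ _ assms]
    by (metis charge_value_def mult.commute)
qed

lemma breakpoint_free_interval_subset_index_interval: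
  assumes k: "k \<in> {1..n + 1}" and \<nu>: "\<nu> \<in> index_interval k" "\<nu> \<in> {a<..<b}"
    and no_breakpoint: "{a<..<b} \<inter> ag_nu y ` {1..n} = {}"
  shows "{a<..<b} \<subseteq> index_interval k"
proof
  fix x assume x: "x \<in> {a<..<b}"
  have "ag_nu y (k - 1) \<le> x" if "2 \<le> k"
  proof -
    have "k - 1 \<in> {1..n}" using k that by auto
    then have "ag_nu y (k - 1) \<notin> {a<..<b}" using no_breakpoint by blast
    then show ?thesis using \<nu> x that by (auto simp: index_interval_def)
  qed
  moreover have "x \<le> ag_nu y k" if "k \<le> n"
  proof -
    have "ag_nu y k \<notin> {a<..<b}" using no_breakpoint k that by auto
    then show ?thesis using \<nu> x that by (auto simp: index_interval_def)
  qed
  ultimately show "x \<in> index_interval k" by (simp add: index_interval_def)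
qed

lemma piecewise_linear_v_opt:
  assumes "i \<in> N"
  shows "piecewise_linear (v_opt i)"
  unfolding piecewise_linear_def
proof (intro exI[of _ "ag_nu y ` {1..n}"] conjI allI impI)
  fix a b assume ab: "a < b \<and> {a<..<b} \<inter> ag_nu y ` {1..n} = {}"
  then have mid: "(a + b) / 2 \<in> {a<..<b}" by auto
  then obtain k where k: "k \<in> {1..n + 1}" "(a + b) / 2 \<in> index_interval k"
    using index_interval_cover by blast
  have "v_opt i x = vpol N \<beta> p0 p1 h0 h1 (sact N1 (greedy_set k)) i
      + bpol N \<beta> p0 p1 \<theta> (sact N1 (greedy_set k)) i * x" if "x \<in> {a<..<b}" for x
    using v_opt_eq_set_value_greedy_set[OF k(1) _ assms] that
      breakpoint_free_interval_subset_index_interval[OF k mid] ab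
    by (auto simp: charge_value_def mult.commute)
  then show "\<exists>c d. \<forall>x\<in>{a<..<b}. v_opt i x = c + d * x" by blast
qed simp

end

theorem corollary4:
  fixes N N01 N1 :: "'a set" and F :: "'a set set" and \<beta> :: real
    and p0 p1 :: "'a \<Rightarrow> 'a \<Rightarrow> real" and h0 h1 \<theta> :: "'a \<Rightarrow> real"
    and \<pi> :: "nat \<Rightarrow> 'a" and y :: "nat \<Rightarrow> real"
  assumes finN: "finite N"
    and partN: "N = N01 \<union> N1" "N01 \<inter> N1 = {}"
    and beta: "0 < \<beta>" "\<beta> < 1"
    and p0_nonneg: "\<forall>i\<in>N. \<forall>j\<in>N. 0 \<le> p0 i j"
    and p1_nonneg: "\<forall>i\<in>N. \<forall>j\<in>N. 0 \<le> p1 i j"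
    and p0_stoch: "\<forall>i\<in>N. (\<Sum>j\<in>N. p0 i j) = 1"
    and p1_stoch: "\<forall>i\<in>N. (\<Sum>j\<in>N. p1 i j) = 1"
    and uncontr: "\<forall>i\<in>N1. \<forall>j\<in>N. p1 i j = p0 i j"
    and theta_pos: "\<forall>j\<in>N. \<theta> j > 0"
    and F: "set_system N01 F"
    and PCL: "pcl_indexable N N01 N1 F \<beta> p0 p1 h0 h1 \<theta> \<pi> y"
  defines "vS \<equiv> (\<lambda>k i \<nu>. vpol N \<beta> p0 p1 h0 h1 (sact N1 (\<pi> ` {k..card N01})) i
                        + \<nu> * bpol N \<beta> p0 p1 \<theta> (sact N1 (\<pi> ` {k..card N01})) i)"
    and "v \<equiv> vopt N N1 \<beta> p0 p1 h0 h1 \<theta>"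
    and "\<nu>\<pi> \<equiv> ag_nu y"
  shows "\<forall>i\<in>N.
           continuous_on UNIV (v i) \<and> concave_on UNIV (v i) \<and> piecewise_linear (v i)
         \<and> (\<forall>\<nu>. v i \<nu> = Min ((\<lambda>k. vS k i \<nu>) ` {1..card N01 + 1}))
         \<and> (\<forall>\<nu>. \<nu> \<le> \<nu>\<pi> 1 \<longrightarrow> v i \<nu> = vS 1 i \<nu>)
         \<and> (\<forall>k\<in>{2..card N01}. \<forall>\<nu>\<in>{\<nu>\<pi> (k - 1)..\<nu>\<pi> k}. v i \<nu> = vS k i \<nu>)
         \<and> (\<forall>\<nu>. \<nu>\<pi> (card N01) \<le> \<nu> \<longrightarrow> v i \<nu> = vS (card N01 + 1) i \<nu>)"
proof -
  interpret pcl_indexable_bandit N N01 N1 \<beta> p0 p1 h0 h1 \<theta> F \<pi> y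
    using finN partN(1) beta F PCL p0_nonneg p1_nonneg p0_stoch p1_stoch
    by unfold_locales (auto simp: stochastic_def)
  have vS: "vS k i \<nu> = set_value (greedy_set k) \<nu> i" if "k \<in> {1..n + 1}" for k i \<nu>
    using ag_set_eq_image[OF greedy finite_N01 that] by (simp add: vS_def charge_value_def)
  have v_on_interval: "v i \<nu> = vS k i \<nu>" if "k \<in> {1..n + 1}" "\<nu> \<in> index_interval k" "i \<in> N"
    for i k \<nu>
    using v_opt_eq_set_value_greedy_set[OF that] vS[OF that(1)] by (simp add: v_def)
  show ?thesis
    unfolding \<nu>\<pi>_def
    using continuous_on_concave[OF open_UNIV concave_v_opt] concave_v_opt piecewise_linear_v_opt
      v_opt_eq_Min vS v_on_interval
    by (auto simp: v_def index_interval_def)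
qed

end
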